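(* Let $\Gamma$ be a matching market and $\widehat\Gamma$ its induced continuum market. If $M$ is a stable integral matching in $\widehat\Gamma$, then the map $\mu$ defined by $\mu(w)=f$ and $w\in\mu(f)$ whenever $M_f(w)=1$ (for $w\in W$, $f\in\widetilde F$) is a stable matching in $\Gamma$.
   Context: Matching market $\Gamma$: finite firms $F$, finite workers $W=\{w_1,\dots,w_n\}$, null firm $\o$, $\widetilde F=F\cup\{\o\}$; each worker $w$ has a strict complete transitive preference $\succ_w$ over $\widetilde F$ ($f\succeq_w f'$ means $f\succ_w f'$ or $f=f'$); each firm $f\in F$ has a strict complete transitive preference $\succ_f$ over $2^W$; $Ch_f(S)$ is the $\succ_f$-best subset of $S$. A matching $\mu$ in $\Gamma$ assigns $\mu(w)\in\widetilde F$ and $\mu(f)\subseteq W$ with $\mu(w)=f\iff w\in\mu(f)$; it is stable if $\mu(w)\succeq_w\o$ for all $w$, $\mu(f)=Ch_f(\mu(f))$ for all $f\in F$, and there is no $f\in F$, $S\subseteq W$ with $f\succeq_w\mu(w)$ for all $w\in S$ and $S\succ_f\mu(f)$. Induced continuum market $\widehat\Gamma$: for each $f\in F$, list the sets $S\succ_f\emptyset$ as indicator vectors $\mathbf u^1\succ_f\cdots\succ_f\mathbf u^L$; for $\mathbf x\in[0,1]^W$ set $t_0=0$, $\mathbf z^0=\mathbf x$, $t_k=\min\{1-\sum_{j<k}t_j,\ z^{k-1}_i: u^k_i\ne0\}$, $\mathbf z^k=\mathbf z^{k-1}-t_k\mathbf u^k$ ($k=1,\dots,L$), and $\widehat{Ch}_f(\mathbf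 x)=\sum_k t_k\mathbf u^k$; also $\widehat{Ch}_{\o}(\mathbf x)=\mathbf x$. A matching in $\widehat\Gamma$ is $M=(M_f)_{f\in\widetilde F}$ with $M_f\in[0,1]^W$ and $\sum_{f\in\widetilde F}M_f(w)=1$ for all $w$; it is integral if all $M_f(w)\in\{0,1\}$. For $\mathbf x,\mathbf x'$, $\mathbf x\vee\mathbf x'$ is the componentwise maximum. Write $M'_f\succeq_f M_f$ if $M'_f=\widehat{Ch}_f(M'_f\vee M_f)$, and $M'_f\succ_f M_f$ if moreover $M'_f\ne M_f$. Let $A^{\preceq f}(M)(w)=\sum_{f'\in\widetilde F: f\succeq_w f'}M_{f'}(w)$. $M$ is stable if (i) $M_f=\widehat{Ch}_f(M_f)$ for every $f\in F$, and for all $w\in W$, $M_f(w)=0$ for every $f$ with $\o\succ_w f$; and (ii) there are no $f\in F$ and $M'_f\in[0,1]^W$ with $M'_f\succ_f M_f$ and $M'_f\le A^{\preceq f}(M)$. *)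

theory Defs
  imports Main "HOL-Library.Indicator_Function"
begin

text \<open>The extended firm set
  F~ = F \<union> {null} is encoded as 'f option, with None the null firm.
  Worker preferences pw w a b means a \<succ>_w b; firm preferences pf f S T means S \<succ>_f T.
  Vectors in [0,1]^W are functions 'w \<Rightarrow> real, valued in [0,1] on W and 0 off W.\<close>

definition strict_total_on :: "'a set \<Rightarrow> ('a \<Rightarrow> 'a \<Rightarrow> bool) \<Rightarrow> bool" where
  "strict_total_on A p \<longleftrightarrow>
     (\<forall>x\<in>A. \<not> p x x) \<and>
     (\<forall>x\<in>A. \<forall>y\<in>A. \<forall>z\<in>A. p x y \<longrightarrow> p y z \<longrightarrow> p x z) \<and>
     (\<forall>x\<in>A. \<forall>y\<in>A. x \<noteq> y \<longrightarrow> p x y \<or> p y x)"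

definition ext_firms :: "'f set \<Rightarrow> 'f option set" where
  "ext_firms F = insert None (Some ` F)"

definition market ::
  "'f set \<Rightarrow> 'w set \<Rightarrow> ('w \<Rightarrow> 'f option \<Rightarrow> 'f option \<Rightarrow> bool) \<Rightarrow> ('f \<Rightarrow> 'w set \<Rightarrow> 'w set \<Rightarrow> bool) \<Rightarrow> bool" where
  "market F W pw pf \<longleftrightarrow> finite F \<and> finite W \<and>
     (\<forall>w\<in>W. strict_total_on (ext_firms F) (pw w)) \<and>
     (\<forall>f\<in>F. strict_total_on (Pow W) (pf f))"

definition weak_pref :: "('a \<Rightarrow> 'a \<Rightarrow> bool) \<Rightarrow> 'a \<Rightarrow> 'a \<Rightarrow> bool" where
  "weak_pref p a b \<longleftrightarrow> p a b \<or> a = b"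

definition Ch :: "('f \<Rightarrow> 'w set \<Rightarrow> 'w set \<Rightarrow> bool) \<Rightarrow> 'f \<Rightarrow> 'w set \<Rightarrow> 'w set" where
  "Ch pf f S = (THE T. T \<subseteq> S \<and> (\<forall>T'. T' \<subseteq> S \<longrightarrow> T' \<noteq> T \<longrightarrow> pf f T T'))"

text \<open>Discrete matching: mu w is the firm of worker w; mu(f) is derived.\<close>
definition assigned :: "'w set \<Rightarrow> ('w \<Rightarrow> 'f option) \<Rightarrow> 'f \<Rightarrow> 'w set" where
  "assigned W mu f = {w \<in> W. mu w = Some f}"

definition is_matching :: "'f set \<Rightarrow> 'w set \<Rightarrow> ('w \<Rightarrow> 'f option) \<Rightarrow> bool" where
  "is_matching F W mu \<longleftrightarrow> (\<forall>w\<in>W. mu w \<in> ext_firms F)"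

definition stable_discrete ::
  "'f set \<Rightarrow> 'w set \<Rightarrow> ('w \<Rightarrow> 'f option \<Rightarrow> 'f option \<Rightarrow> bool) \<Rightarrow> ('f \<Rightarrow> 'w set \<Rightarrow> 'w set \<Rightarrow> bool)
    \<Rightarrow> ('w \<Rightarrow> 'f option) \<Rightarrow> bool" where
  "stable_discrete F W pw pf mu \<longleftrightarrow>
     (\<forall>w\<in>W. weak_pref (pw w) (mu w) None) \<and>
     (\<forall>f\<in>F. assigned W mu f = Ch pf f (assigned W mu f)) \<and>
     \<not> (\<exists>f\<in>F. \<exists>S. S \<subseteq> W \<and> (\<forall>w\<in>S. weak_pref (pw w) (Some f) (mu w)) \<and>
                     pf f S (assigned W mu f))"

definition accept_list :: "'w set \<Rightarrow> ('f \<Rightarrow> 'w set \<Rightarrow> 'w set \<Rightarrow> bool) \<Rightarrow> 'f \<Rightarrow> 'w set list" where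
  "accept_list W pf f = (THE L. distinct L \<and> set L = {S. S \<subseteq> W \<and> pf f S {}} \<and> sorted_wrt (pf f) L)"

text \<open>The greedy procedure: r = 1 - sum of previous t_j, z = current residual.
  t = min({r} \<union> {z i. i \<in> S}); output sum of t_k u^k.\<close>
fun greedy :: "'w set list \<Rightarrow> real \<Rightarrow> ('w \<Rightarrow> real) \<Rightarrow> ('w \<Rightarrow> real)" where
  "greedy [] r z = (\<lambda>_. 0)"
| "greedy (S # Ss) r z =
     (let t = Min (insert r (z ` S))
      in (\<lambda>i. t * indicator S i + greedy Ss (r - t) (\<lambda>j. z j - t * indicator S j) i))"

definition hCh :: "'w set \<Rightarrow> ('f \<Rightarrow> 'w set \<Rightarrow> 'w set \<Rightarrow> bool) \<Rightarrow> 'f \<Rightarrow> ('w \<Rightarrow> real) \<Rightarrow> ('w \<Rightarrow> real)" where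
  "hCh W pf f x = greedy (accept_list W pf f) 1 x"

definition unit_vecs :: "'w set \<Rightarrow> ('w \<Rightarrow> real) set" where
  "unit_vecs W = {x. (\<forall>w\<in>W. 0 \<le> x w \<and> x w \<le> 1) \<and> (\<forall>w. w \<notin> W \<longrightarrow> x w = 0)}"

definition cont_matching :: "'f set \<Rightarrow> 'w set \<Rightarrow> ('f option \<Rightarrow> 'w \<Rightarrow> real) \<Rightarrow> bool" where
  "cont_matching F W M \<longleftrightarrow> (\<forall>g\<in>ext_firms F. M g \<in> unit_vecs W) \<and>
     (\<forall>w\<in>W. (\<Sum>g\<in>ext_firms F. M g w) = 1)"

definition integral_matching :: "'f set \<Rightarrow> 'w set \<Rightarrow> ('f option \<Rightarrow> 'w \<Rightarrow> real) \<Rightarrow> bool" where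
  "integral_matching F W M \<longleftrightarrow> (\<forall>g\<in>ext_firms F. \<forall>w\<in>W. M g w = 0 \<or> M g w = 1)"

definition vmax :: "('w \<Rightarrow> real) \<Rightarrow> ('w \<Rightarrow> real) \<Rightarrow> ('w \<Rightarrow> real)" where
  "vmax x y = (\<lambda>w. max (x w) (y w))"

definition cont_weak_pref :: "'w set \<Rightarrow> ('f \<Rightarrow> 'w set \<Rightarrow> 'w set \<Rightarrow> bool) \<Rightarrow> 'f \<Rightarrow> ('w \<Rightarrow> real) \<Rightarrow> ('w \<Rightarrow> real) \<Rightarrow> bool" where
  "cont_weak_pref W pf f x y \<longleftrightarrow> x = hCh W pf f (vmax x y)"

definition cont_strict_pref :: "'w set \<Rightarrow> ('f \<Rightarrow> 'w set \<Rightarrow> 'w set \<Rightarrow> bool) \<Rightarrow> 'f \<Rightarrow> ('w \<Rightarrow> real) \<Rightarrow> ('w \<Rightarrow> real) \<Rightarrow> bool" where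
  "cont_strict_pref W pf f x y \<longleftrightarrow> cont_weak_pref W pf f x y \<and> x \<noteq> y"

definition A_below :: "'f set \<Rightarrow> ('w \<Rightarrow> 'f option \<Rightarrow> 'f option \<Rightarrow> bool) \<Rightarrow> 'f \<Rightarrow> ('f option \<Rightarrow> 'w \<Rightarrow> real) \<Rightarrow> 'w \<Rightarrow> real" where
  "A_below F pw f M w = (\<Sum>g\<in>{g\<in>ext_firms F. weak_pref (pw w) (Some f) g}. M g w)"

definition stable_cont ::
  "'f set \<Rightarrow> 'w set \<Rightarrow> ('w \<Rightarrow> 'f option \<Rightarrow> 'f option \<Rightarrow> bool) \<Rightarrow> ('f \<Rightarrow> 'w set \<Rightarrow> 'w set \<Rightarrow> bool)
    \<Rightarrow> ('f option \<Rightarrow> 'w \<Rightarrow> real) \<Rightarrow> bool" where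
  "stable_cont F W pw pf M \<longleftrightarrow>
     (\<forall>f\<in>F. M (Some f) = hCh W pf f (M (Some f))) \<and>
     (\<forall>w\<in>W. \<forall>f\<in>F. pw w None (Some f) \<longrightarrow> M (Some f) w = 0) \<and>
     \<not> (\<exists>f\<in>F. \<exists>M'\<in>unit_vecs W. cont_strict_pref W pf f M' (M (Some f)) \<and>
                 (\<forall>w\<in>W. M' w \<le> A_below F pw f M w))"

end

theory Submission
  imports Defs
begin

text \<open>On an indicator vector the greedy procedure selects the first acceptable set contained in
  the support, which is the best acceptable subset; so on integral vectors \<open>hCh\<close> is the discrete
  choice function \<open>Ch\<close>. Hence an integral stable matching is a fixed point of \<open>Ch\<close> firm by firm.
  A discrete blocking coalition \<open>S\<close> of \<open>f\<close> yields the continuum blocking vector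
  \<open>indicator (Ch (S \<union> \<mu>(f)))\<close>: by independence of irrelevant alternatives it is preferred to
  \<open>\<mu>(f)\<close>, it differs from \<open>\<mu>(f)\<close> because it is at least as good as \<open>S\<close>, and it lies below
  \<open>A_below F pw f M\<close> because each of its workers weakly prefers \<open>f\<close> to her current firm.\<close>

subsection \<open>Strict total orders on finite sets\<close>

lemma strict_total_on_asym:
  assumes "strict_total_on A p" "x \<in> A" "y \<in> A" "p x y"
  shows "\<not> p y x"
  using assms unfolding strict_total_on_def by blast

lemma strict_total_on_has_best:
  assumes "strict_total_on A p" "finite B" "B \<noteq> {}" "B \<subseteq> A"
  shows "\<exists>m\<in>B. \<forall>y\<in>B. y \<noteq> m \<longrightarrow> p m y"
  using assms(2-4)
proof (induction B rule: finite_ne_induct)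
  case (singleton x)
  then show ?case by auto
next
  case (insert x B)
  then obtain m where m: "m \<in> B" "\<forall>y\<in>B. y \<noteq> m \<longrightarrow> p m y" by auto
  have A: "x \<in> A" "B \<subseteq> A" and "x \<noteq> m" using insert m by auto
  then consider "p x m" | "p m x" using assms(1) m unfolding strict_total_on_def by blast
  then show ?case
  proof cases
    case 1
    have "p x y" if "y \<in> B" for y
    proof (cases "y = m")
      case False
      then have "p m y" using m that by blast
      then show ?thesis using 1 assms(1) A m that unfolding strict_total_on_def by blast
    qed (use 1 in simp)
    then show ?thesis by auto
  next
    case 2
    then show ?thesis using m by auto
  qed
qed

lemma sorted_wrt_enumeration_exists:
  assumes "strict_total_on A p" "finite B" "B \<subseteq> A"
  shows "\<exists>L. distinct L \<and> set L = B \<and> sorted_wrt p L"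
  using assms(2,3)
proof (induction "card B" arbitrary: B)
  case 0
  then show ?case by auto
next
  case (Suc n)
  then have "B \<noteq> {}" by auto
  then obtain m where m: "m \<in> B" "\<forall>y\<in>B. y \<noteq> m \<longrightarrow> p m y"
    using strict_total_on_has_best[OF assms(1)] Suc.prems by blast
  then have "n = card (B - {m})" using Suc by simp
  then obtain L where "distinct L" "set L = B - {m}" "sorted_wrt p L"
    using Suc by blast
  then show ?case using m by (intro exI[of _ "m # L"]) auto
qed

lemma sorted_wrt_enumeration_unique:
  assumes "strict_total_on A p" "set L1 \<subseteq> A" "sorted_wrt p L1" "sorted_wrt p L2"
    "set L1 = set L2"
  shows "L1 = L2"
  using assms(2-)
proof (induction L1 arbitrary: L2)
  case Nil
  then show ?case by auto
next
  case (Cons a L1)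
  then obtain b L2' where L2: "L2 = b # L2'" by (cases L2) auto
  have a: "a \<in> A" and irrefl: "\<And>x. x \<in> A \<Longrightarrow> \<not> p x x"
    using Cons.prems(1) assms(1) unfolding strict_total_on_def by auto
  have "a = b"
  proof (rule ccontr)
    assume "a \<noteq> b"
    then have "p a b" "p b a" using Cons.prems(2-4) L2 by (auto simp: set_eq_iff)
    moreover have "b \<in> A" using Cons.prems(1,4) L2 by auto
    ultimately show False using strict_total_on_asym[OF assms(1)] a by blast
  qed
  moreover have "a \<notin> set L1" "b \<notin> set L2'"
    using Cons.prems(2,3) L2 a irrefl \<open>a = b\<close> by auto
  ultimately have "set L1 = set L2'" using Cons.prems(4) L2 by auto
  then show ?case using Cons L2 \<open>a = b\<close> by auto
qed

lemma find_Some_sorted_wrt: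
  assumes "sorted_wrt p L" "find P L = Some T" "T' \<in> set L" "P T'" "T' \<noteq> T"
  shows "p T T'"
  using assms by (induction L) (auto split: if_splits)

lemma indicator_eq_indicator_iff:
  "(indicator A :: 'a \<Rightarrow> 'b::zero_neq_one) = indicator B \<longleftrightarrow> A = B"
  by (metis indicator_eq_1_iff set_eqI)

subsection \<open>The discrete choice function\<close>

lemma Ch_spec:
  assumes "strict_total_on (Pow W) (pf f)" "finite W" "X \<subseteq> W"
  shows "Ch pf f X \<subseteq> X" and "T \<subseteq> X \<Longrightarrow> T \<noteq> Ch pf f X \<Longrightarrow> pf f (Ch pf f X) T"
proof -
  let ?best = "\<lambda>T. T \<subseteq> X \<and> (\<forall>T'. T' \<subseteq> X \<longrightarrow> T' \<noteq> T \<longrightarrow> pf f T T')"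
  obtain T0 where best: "?best T0"
    using strict_total_on_has_best[OF assms(1), of "Pow X"] assms(2,3)
    by (metis Pow_iff Pow_mono empty_iff empty_subsetI finite_Pow_iff finite_subset)
  have unique: "T1 = T2" if "?best T1" "?best T2" for T1 T2
    using that strict_total_on_asym[OF assms(1)] assms(3) by (metis Pow_iff order_trans)
  have "?best (Ch pf f X)"
    unfolding Ch_def by (rule theI[of _ T0]) (use best unique in blast)+
  then show "Ch pf f X \<subseteq> X" and "T \<subseteq> X \<Longrightarrow> T \<noteq> Ch pf f X \<Longrightarrow> pf f (Ch pf f X) T"
    by auto
qed

lemma Ch_superset_eq:
  assumes "strict_total_on (Pow W) (pf f)" "finite W" "X \<subseteq> W" "Ch pf f X \<subseteq> Y" "Y \<subseteq> X"
  shows "Ch pf f Y = Ch pf f X"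
proof (rule ccontr)
  assume ne: "Ch pf f Y \<noteq> Ch pf f X"
  have YW: "Y \<subseteq> W" using assms by auto
  have "Ch pf f Y \<subseteq> X" using Ch_spec(1)[of W pf f Y, OF assms(1,2) YW] assms(5) by auto
  then have "pf f (Ch pf f X) (Ch pf f Y)"
    using Ch_spec(2)[of W pf f, OF assms(1-3)] ne by auto
  moreover have "pf f (Ch pf f Y) (Ch pf f X)"
    using Ch_spec(2)[of W pf f Y, OF assms(1,2) YW] assms(4) ne by auto
  ultimately show False
    using strict_total_on_asym[OF assms(1)] Ch_spec(1)[of W pf f] assms(1-3) YW
    by (metis Pow_iff order_trans)
qed

lemma Ch_Un_neq_if_pref:
  assumes "strict_total_on (Pow W) (pf f)" "finite W" "S \<subseteq> W" "A \<subseteq> W" "pf f S A"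
  shows "Ch pf f (S \<union> A) \<noteq> A"
proof
  assume Ch_eq: "Ch pf f (S \<union> A) = A"
  note asym = strict_total_on_asym[OF assms(1)]
  have "S \<noteq> A" using assms(3,5) asym[of S S] by auto
  then have "pf f A S" using Ch_spec(2)[of W pf f "S \<union> A" S] assms(1-4) Ch_eq by auto
  then show False using assms(3-5) asym[of S A] by auto
qed

subsection \<open>The continuum choice function on integral vectors\<close>

lemma greedy_zero_budget:
  assumes "\<forall>S\<in>set L. finite S" "\<forall>j. z j \<ge> 0"
  shows "greedy L 0 z = (\<lambda>_. 0)"
  using assms
proof (induction L arbitrary: z)
  case Nil
  then show ?case by simp
next
  case (Cons S Ss)
  have "Min (insert 0 (z ` S)) = 0"
    using Cons.prems by (intro Min_eqI) auto
  then show ?case using Cons by (simp add: Let_def)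
qed

lemma greedy_indicator:
  assumes "\<forall>S\<in>set L. finite S"
  shows "greedy L 1 (indicator X) =
    (case find (\<lambda>T. T \<subseteq> X) L of None \<Rightarrow> (\<lambda>_. 0) | Some T \<Rightarrow> indicator T)"
  using assms
proof (induction L)
  case Nil
  then show ?case by simp
next
  case (Cons S Ss)
  show ?case
  proof (cases "S \<subseteq> X")
    case True
    have "Min (insert 1 ((indicator X :: _ \<Rightarrow> real) ` S)) = 1"
      using Cons.prems True by (intro Min_eqI) auto
    moreover have "greedy Ss 0 (\<lambda>j. (indicator X j :: real) - 1 * indicator S j) = (\<lambda>_. 0)"
      using Cons.prems True by (intro greedy_zero_budget) (auto split: split_indicator)
    ultimately show ?thesis using True by (simp add: Let_def)
  next
    case False
    then obtain s where "s \<in> S" "s \<notin> X" by blast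
    then have "Min (insert 1 ((indicator X :: _ \<Rightarrow> real) ` S)) = 0"
      using Cons.prems by (intro Min_eqI) (auto simp: image_iff intro!: bexI[of _ s])
    then show ?thesis using False Cons by (simp add: Let_def)
  qed
qed

lemma accept_list_spec:
  assumes "strict_total_on (Pow W) (pf f)" "finite W"
  shows "set (accept_list W pf f) = {S. S \<subseteq> W \<and> pf f S {}}"
    and "sorted_wrt (pf f) (accept_list W pf f)"
proof -
  let ?P = "\<lambda>L. distinct L \<and> set L = {S. S \<subseteq> W \<and> pf f S {}} \<and> sorted_wrt (pf f) L"
  have "finite {S. S \<subseteq> W \<and> pf f S {}}" using assms(2) by simp
  then obtain L where L: "?P L"
    using sorted_wrt_enumeration_exists[OF assms(1), of "{S. S \<subseteq> W \<and> pf f S {}}"] by blast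
  have unique: "L1 = L2" if "?P L1" "?P L2" for L1 L2
  proof (rule sorted_wrt_enumeration_unique[OF assms(1)])
    show "set L1 \<subseteq> Pow W" using that(1) by blast
  qed (use that in simp_all)
  have "?P (accept_list W pf f)"
    unfolding accept_list_def by (rule theI[of _ L]) (use L unique in blast)+
  then show "set (accept_list W pf f) = {S. S \<subseteq> W \<and> pf f S {}}"
    and "sorted_wrt (pf f) (accept_list W pf f)"
    by auto
qed

lemma Ch_eq_empty_imp_unacceptable:
  assumes "strict_total_on (Pow W) (pf f)" "finite W" "X \<subseteq> W" "Ch pf f X = {}" "T \<subseteq> X"
  shows "\<not> pf f T {}"
proof (cases "T = {}")
  case True
  then show ?thesis using strict_total_on_asym[OF assms(1), of "{}" "{}"] by auto
next
  case False
  then have "pf f {} T" using Ch_spec(2)[of W pf f, OF assms(1-3,5)] assms(4) by simp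
  then show ?thesis using strict_total_on_asym[OF assms(1), of "{}" T] assms(3,5) by simp
qed

lemma find_accept_list_eq_Ch:
  assumes "strict_total_on (Pow W) (pf f)" "finite W" "X \<subseteq> W"
  shows "find (\<lambda>T. T \<subseteq> X) (accept_list W pf f) =
    (if Ch pf f X = {} then None else Some (Ch pf f X))"
proof -
  let ?L = "accept_list W pf f" and ?C = "Ch pf f X"
  note set_L = accept_list_spec(1)[of W pf f, OF assms(1,2)]
  have CX: "?C \<subseteq> X" by (rule Ch_spec(1)[of W pf f, OF assms])
  show ?thesis
  proof (cases "?C = {}")
    case True
    then show ?thesis
      using Ch_eq_empty_imp_unacceptable[of W pf f, OF assms] set_L by (auto simp: find_None_iff)
  next
    case False
    then have "pf f ?C {}" using Ch_spec(2)[of W pf f, OF assms, of "{}"] by auto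
    then have C_in: "?C \<in> set ?L" using set_L CX assms(3) by auto
    then obtain T where T: "find (\<lambda>T. T \<subseteq> X) ?L = Some T"
      using CX by (cases "find (\<lambda>T. T \<subseteq> X) ?L") (auto simp: find_None_iff)
    then have TX: "T \<subseteq> X" using set_L by (auto simp: find_Some_iff)
    have "T = ?C"
    proof (rule ccontr)
      assume ne: "T \<noteq> ?C"
      then have "pf f T ?C"
        using find_Some_sorted_wrt[OF accept_list_spec(2)[of W pf f, OF assms(1,2)] T C_in CX]
        by simp
      moreover have "pf f ?C T" using Ch_spec(2)[of W pf f, OF assms TX] ne by auto
      ultimately show False
        using strict_total_on_asym[OF assms(1), of T ?C] CX TX assms(3) by auto
    qed
    then show ?thesis using T False by simp
  qed
qed

theorem hCh_indicator:
  assumes "strict_total_on (Pow W) (pf f)" "finite W" "X \<subseteq> W"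
  shows "hCh W pf f (indicator X) = indicator (Ch pf f X)"
proof -
  have "\<forall>S\<in>set (accept_list W pf f). finite S"
    using accept_list_spec(1)[of W pf f, OF assms(1,2)]
    by (auto intro: rev_finite_subset[OF assms(2)])
  then show ?thesis
    unfolding hCh_def using find_accept_list_eq_Ch[of W pf f, OF assms]
    by (simp add: greedy_indicator fun_eq_iff)
qed

lemma cont_weak_pref_indicator_Ch_Un:
  assumes "strict_total_on (Pow W) (pf f)" "finite W" "S \<subseteq> W" "A \<subseteq> W"
  shows "cont_weak_pref W pf f (indicator (Ch pf f (S \<union> A))) (indicator A)"
proof -
  let ?T = "Ch pf f (S \<union> A)"
  have SA: "S \<union> A \<subseteq> W" using assms(3,4) by auto
  have T: "?T \<subseteq> S \<union> A" by (rule Ch_spec(1)[of W pf f, OF assms(1,2) SA])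
  have "vmax (indicator ?T) (indicator A) = indicator (?T \<union> A)"
    by (auto simp: vmax_def fun_eq_iff split: split_indicator)
  moreover have "Ch pf f (?T \<union> A) = ?T"
    using T by (intro Ch_superset_eq[of W pf f, OF assms(1,2) SA]) auto
  moreover have "?T \<union> A \<subseteq> W" using T SA by auto
  ultimately show ?thesis
    using hCh_indicator[of W pf f, OF assms(1,2)] by (simp add: cont_weak_pref_def)
qed

subsection \<open>Stability transfers from the continuum market\<close>

lemma integral_matching_assignment:
  assumes "cont_matching F W M" "integral_matching F W M"
    "\<forall>w\<in>W. \<forall>g\<in>ext_firms F. M g w = 1 \<longrightarrow> mu w = g" "w \<in> W"
  shows "mu w \<in> ext_firms F" and "M (mu w) w = 1"
proof -
  have "\<exists>g\<in>ext_firms F. M g w = 1"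
  proof (rule ccontr)
    assume "\<not> ?thesis"
    then have "\<forall>g\<in>ext_firms F. M g w = 0"
      using assms(2,4) by (auto simp: integral_matching_def)
    then have "(\<Sum>g\<in>ext_firms F. M g w) = 0" by simp
    then show False using assms(1,4) by (simp add: cont_matching_def)
  qed
  then show "mu w \<in> ext_firms F" and "M (mu w) w = 1" using assms(3,4) by auto
qed

lemma integral_matching_eq_indicator_assigned:
  assumes "cont_matching F W M" "integral_matching F W M"
    "\<forall>w\<in>W. \<forall>g\<in>ext_firms F. M g w = 1 \<longrightarrow> mu w = g" "f \<in> F"
  shows "M (Some f) = indicator (assigned W mu f)"
proof
  fix w
  have f: "Some f \<in> ext_firms F" using assms(4) by (simp add: ext_firms_def)
  show "M (Some f) w = indicator (assigned W mu f) w"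
  proof (cases "w \<in> W")
    case False
    then show ?thesis using assms(1) f by (simp add: cont_matching_def unit_vecs_def assigned_def)
  next
    case True
    show ?thesis
    proof (cases "mu w = Some f")
      case True
      then show ?thesis
        using integral_matching_assignment(2)[OF assms(1-3) \<open>w \<in> W\<close>] \<open>w \<in> W\<close>
        by (simp add: assigned_def)
    next
      case False
      then have "M (Some f) w = 0"
        using assms(2,3) f \<open>w \<in> W\<close> unfolding integral_matching_def by blast
      then show ?thesis using False by (simp add: assigned_def)
    qed
  qed
qed

lemma stable_cont_individually_rational:
  assumes "market F W pw pf" "stable_cont F W pw pf M" "w \<in> W"
    "mu w \<in> ext_firms F" "M (mu w) w = 1"
  shows "weak_pref (pw w) (mu w) None"
proof (cases "mu w")
  case None
  then show ?thesis by (simp add: weak_pref_def)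
next
  case (Some f)
  then have f: "f \<in> F" using assms(4) by (auto simp: ext_firms_def)
  then have "\<not> pw w None (Some f)" using assms(2,3,5) Some by (auto simp: stable_cont_def)
  moreover have "strict_total_on (ext_firms F) (pw w)" using assms(1,3) by (simp add: market_def)
  ultimately have "pw w (Some f) None"
    using f unfolding strict_total_on_def ext_firms_def by blast
  then show ?thesis using Some by (simp add: weak_pref_def)
qed

lemma stable_cont_assigned_eq_Ch:
  assumes "market F W pw pf" "stable_cont F W pw pf M" "f \<in> F"
    "M (Some f) = indicator (assigned W mu f)"
  shows "assigned W mu f = Ch pf f (assigned W mu f)"
proof -
  have "strict_total_on (Pow W) (pf f)" "finite W" "assigned W mu f \<subseteq> W"
    using assms(1,3) by (auto simp: market_def assigned_def)
  then have hCh_M: "hCh W pf f (M (Some f)) = indicator (Ch pf f (assigned W mu f))"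
    using assms(4) hCh_indicator by metis
  have "M (Some f) = hCh W pf f (M (Some f))"
    using assms(2,3) unfolding stable_cont_def by blast
  then have "M (Some f) = indicator (Ch pf f (assigned W mu f))"
    using hCh_M by simp
  then show ?thesis using assms(4) by (simp add: indicator_eq_indicator_iff)
qed

lemma cont_matching_nonneg:
  assumes "cont_matching F W M" "g \<in> ext_firms F"
  shows "0 \<le> M g w"
  using assms by (cases "w \<in> W") (auto simp: cont_matching_def unit_vecs_def)

lemma A_below_nonneg:
  assumes "cont_matching F W M"
  shows "0 \<le> A_below F pw f M w"
  unfolding A_below_def by (rule sum_nonneg) (use cont_matching_nonneg[OF assms] in simp)

lemma A_below_ge:
  assumes "finite F" "cont_matching F W M" "g \<in> ext_firms F" "weak_pref (pw w) (Some f) g"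
  shows "M g w \<le> A_below F pw f M w"
  unfolding A_below_def
proof (rule member_le_sum)
  show "finite {g \<in> ext_firms F. weak_pref (pw w) (Some f) g}"
    using assms(1) by (simp add: ext_firms_def)
qed (use assms(3,4) cont_matching_nonneg[OF assms(2)] in auto)

lemma stable_cont_no_blocking:
  assumes "market F W pw pf" "cont_matching F W M" "stable_cont F W pw pf M"
    "\<forall>w\<in>W. mu w \<in> ext_firms F \<and> M (mu w) w = 1"
    "f \<in> F" "M (Some f) = indicator (assigned W mu f)"
    "S \<subseteq> W" "\<forall>w\<in>S. weak_pref (pw w) (Some f) (mu w)"
  shows "\<not> pf f S (assigned W mu f)"
proof
  assume S_better: "pf f S (assigned W mu f)"
  let ?A = "assigned W mu f"
  define T where "T = Ch pf f (S \<union> ?A)"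
  have p: "strict_total_on (Pow W) (pf f)" and W: "finite W" and "finite F"
    using assms(1,5) by (auto simp: market_def)
  have AW: "?A \<subseteq> W" by (auto simp: assigned_def)
  have TSA: "T \<subseteq> S \<union> ?A"
    unfolding T_def using Ch_spec(1)[of W pf f, OF p W] assms(7) AW by auto
  have "indicator T \<noteq> M (Some f)"
    using Ch_Un_neq_if_pref[of W pf f, OF p W assms(7) AW S_better] assms(6)
    by (simp add: T_def indicator_eq_indicator_iff)
  moreover have "cont_weak_pref W pf f (indicator T) (M (Some f))"
    unfolding T_def assms(6) using cont_weak_pref_indicator_Ch_Un[of W pf f, OF p W assms(7) AW] .
  moreover have "indicator T \<in> unit_vecs W"
    using TSA assms(7) AW by (auto simp: unit_vecs_def split: split_indicator)
  moreover have "indicator T w \<le> A_below F pw f M w" if w: "w \<in> W" for w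
  proof (cases "w \<in> T")
    case True
    then have "weak_pref (pw w) (Some f) (mu w)"
      using TSA assms(8) by (auto simp: assigned_def weak_pref_def)
    moreover have "mu w \<in> ext_firms F" "M (mu w) w = 1" using assms(4) w by auto
    ultimately have "M (mu w) w \<le> A_below F pw f M w"
      by (intro A_below_ge[OF \<open>finite F\<close> assms(2)])
    then show ?thesis using True \<open>M (mu w) w = 1\<close> by simp
  qed (simp add: A_below_nonneg[OF assms(2)])
  ultimately show False
    using assms(3,5) unfolding stable_cont_def cont_strict_pref_def by blast
qed

theorem lemma2:
  fixes F :: "'f set" and W :: "'w set"
    and pw :: "'w \<Rightarrow> 'f option \<Rightarrow> 'f option \<Rightarrow> bool"
    and pf :: "'f \<Rightarrow> 'w set \<Rightarrow> 'w set \<Rightarrow> bool"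
    and M :: "'f option \<Rightarrow> 'w \<Rightarrow> real"
    and mu :: "'w \<Rightarrow> 'f option"
  assumes "market F W pw pf"
    and "cont_matching F W M"
    and "integral_matching F W M"
    and "stable_cont F W pw pf M"
    and "\<forall>w\<in>W. \<forall>g\<in>ext_firms F. M g w = 1 \<longrightarrow> mu w = g"
  shows "is_matching F W mu \<and> stable_discrete F W pw pf mu"
proof -
  have mu: "\<forall>w\<in>W. mu w \<in> ext_firms F \<and> M (mu w) w = 1"
    using integral_matching_assignment[OF assms(2,3,5)] by blast
  have M_f: "M (Some f) = indicator (assigned W mu f)" if "f \<in> F" for f
    using integral_matching_eq_indicator_assigned[OF assms(2,3,5) that] .
  have "is_matching F W mu"
    using mu by (simp add: is_matching_def)
  moreover have "\<forall>w\<in>W. weak_pref (pw w) (mu w) None"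
    using stable_cont_individually_rational[OF assms(1,4)] mu by blast
  moreover have "\<forall>f\<in>F. assigned W mu f = Ch pf f (assigned W mu f)"
    using stable_cont_assigned_eq_Ch[OF assms(1,4)] M_f by blast
  moreover have "\<not> (\<exists>f\<in>F. \<exists>S. S \<subseteq> W \<and> (\<forall>w\<in>S. weak_pref (pw w) (Some f) (mu w)) \<and>
                     pf f S (assigned W mu f))"
    using stable_cont_no_blocking[OF assms(1,2,4) mu] M_f by blast
  ultimately show ?thesis by (simp add: stable_discrete_def)
qed

end
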